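(* Let $P,Q$ be posets and $f:P\to Q$ an isotone map. There is a unique monoid homomorphism $\mathcal{M}(f):\mathcal{M}(P)\to\mathcal{M}(Q)$ with $\mathcal{M}(f)([x,y]_P)=[f(x),f(y)]_Q$ for all $x\le y$ in $P$. Moreover, if $f$ is one-to-one, then $\mathcal{M}(f)$ is one-to-one.
   Context: For a poset $P$, the interval monoid $\mathcal{M}(P)$ is the monoid presented by generators $[x,y]_P$ for $x\le y$ in $P$ and relations $[x,x]_P=1$ ($x\in P$) and $[x,z]_P=[x,y]_P[y,z]_P$ whenever $x\le y\le z$. A map $f$ is isotone if $x\le y$ implies $f(x)\le f(y)$. *)

theory Defs
  imports "HOL-Algebra.Group"
begin

text \<open>Generators [x,y] (x \<le> y) are the pairs (x,y) \<in> r;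
  words in the generators are lists over r.  interval_cong A r is the monoid
  congruence on words generated by the defining relations
  [x,x] = 1 and [x,z] = [x,y][y,z].\<close>

inductive interval_cong :: "'a set \<Rightarrow> ('a \<times> 'a) set \<Rightarrow> ('a \<times> 'a) list \<Rightarrow> ('a \<times> 'a) list \<Rightarrow> bool"
  for A :: "'a set" and r :: "('a \<times> 'a) set" where
  ic_refl: "w \<in> lists r \<Longrightarrow> interval_cong A r w w"
| ic_sym: "interval_cong A r u v \<Longrightarrow> interval_cong A r v u"
| ic_trans: "interval_cong A r u v \<Longrightarrow> interval_cong A r v w \<Longrightarrow> interval_cong A r u w"
| ic_unit: "x \<in> A \<Longrightarrow> u \<in> lists r \<Longrightarrow> v \<in> lists r \<Longrightarrow>
    interval_cong A r (u @ [(x, x)] @ v) (u @ v)"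
| ic_split: "(x, y) \<in> r \<Longrightarrow> (y, z) \<in> r \<Longrightarrow> u \<in> lists r \<Longrightarrow> v \<in> lists r \<Longrightarrow>
    interval_cong A r (u @ [(x, z)] @ v) (u @ [(x, y), (y, z)] @ v)"

definition ic_class :: "'a set \<Rightarrow> ('a \<times> 'a) set \<Rightarrow> ('a \<times> 'a) list \<Rightarrow> ('a \<times> 'a) list set" where
  "ic_class A r w = {w'. interval_cong A r w w'}"

definition interval_monoid :: "'a set \<Rightarrow> ('a \<times> 'a) set \<Rightarrow> ('a \<times> 'a) list set monoid" where
  "interval_monoid A r =
     \<lparr> carrier = ic_class A r ` lists r,
       mult = (\<lambda>X Y. \<Union>u\<in>X. \<Union>v\<in>Y. ic_class A r (u @ v)),
       one = ic_class A r [] \<rparr>"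

definition interval_gen :: "'a set \<Rightarrow> ('a \<times> 'a) set \<Rightarrow> 'a \<Rightarrow> 'a \<Rightarrow> ('a \<times> 'a) list set" where
  "interval_gen A r x y = ic_class A r [(x, y)]"

definition isotone_on :: "'a set \<Rightarrow> ('a \<times> 'a) set \<Rightarrow> 'b set \<Rightarrow> ('b \<times> 'b) set \<Rightarrow> ('a \<Rightarrow> 'b) \<Rightarrow> bool" where
  "isotone_on A r B s f \<longleftrightarrow> f \<in> A \<rightarrow> B \<and> (\<forall>x y. (x, y) \<in> r \<longrightarrow> (f x, f y) \<in> s)"

definition monoid_hom :: "('c, 'm) monoid_scheme \<Rightarrow> ('d, 'n) monoid_scheme \<Rightarrow> ('c \<Rightarrow> 'd) \<Rightarrow> bool" where
  "monoid_hom G H h \<longleftrightarrow> h \<in> hom G H \<and> h \<one>\<^bsub>G\<^esub> = \<one>\<^bsub>H\<^esub>"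

end

theory Submission
  imports Defs
begin

text \<open>Existence and uniqueness are formal: an isotone map respects the defining relations,
  and the generators generate.  For injectivity, reduce every word from the right by deleting
  letters [x,x] and merging neighbours [x,y][y,z] into [x,z].  Over a poset the reduced word
  is invariant under the defining relations, since by antisymmetry [x,y][y,x] only occurs
  with x = y.  Reduction commutes with letterwise application of an injective map, so if the
  images of two words are congruent in Q, their reduced words have equal images, hence are
  equal, and the words are congruent in P.\<close>

lemma interval_cong_lists:
  assumes "interval_cong A r u v" "refl_on A r" "trans r"
  shows "u \<in> lists r \<and> v \<in> lists r"
  using assms
proof (induction rule: interval_cong.induct)
  case (ic_unit x u v)
  then show ?case by (simp add: refl_onD)
next
  case (ic_split x y z u v)
  then show ?case by (auto dest: transD)
qed auto

lemma interval_cong_append_left: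
  assumes "interval_cong A r u v" "w \<in> lists r"
  shows "interval_cong A r (w @ u) (w @ v)"
  using assms
proof (induction rule: interval_cong.induct)
  case (ic_refl u)
  then show ?case by (simp add: interval_cong.ic_refl)
next
  case (ic_unit x u v)
  then show ?case using interval_cong.ic_unit[of x A "w @ u" r v] by simp
next
  case (ic_split x y z u v)
  then show ?case using interval_cong.ic_split[of x y r z "w @ u" v A] by simp
qed (auto intro: interval_cong.intros)

lemma interval_cong_append_right:
  assumes "interval_cong A r u v" "w \<in> lists r"
  shows "interval_cong A r (u @ w) (v @ w)"
  using assms
proof (induction rule: interval_cong.induct)
  case (ic_refl u)
  then show ?case by (simp add: interval_cong.ic_refl)
next
  case (ic_unit x u v)
  then show ?case using interval_cong.ic_unit[of x A u r "v @ w"] by simp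
next
  case (ic_split x y z u v)
  then show ?case using interval_cong.ic_split[of x y r z u "v @ w" A] by simp
qed (auto intro: interval_cong.intros)

lemma interval_cong_append:
  assumes "interval_cong A r u u'" "interval_cong A r v v'" "refl_on A r" "trans r"
  shows "interval_cong A r (u @ v) (u' @ v')"
proof -
  have "v \<in> lists r" "u' \<in> lists r"
    using assms interval_cong_lists by blast+
  then show ?thesis
    using assms interval_cong_append_left interval_cong_append_right interval_cong.ic_trans
    by blast
qed

lemma interval_cong_map:
  assumes "interval_cong A r u v" "isotone_on A r B s f"
  shows "interval_cong B s (map (map_prod f f) u) (map (map_prod f f) v)"
  using assms
proof (induction rule: interval_cong.induct)
  case (ic_refl w)
  then show ?case by (auto simp: isotone_on_def intro!: interval_cong.ic_refl)
next
  case (ic_unit x u v)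
  then have "f x \<in> B" "map (map_prod f f) u \<in> lists s" "map (map_prod f f) v \<in> lists s"
    by (auto simp: isotone_on_def)
  then show ?case
    using interval_cong.ic_unit[of "f x" B "map (map_prod f f) u" s "map (map_prod f f) v"]
    by simp
next
  case (ic_split x y z u v)
  then have "(f x, f y) \<in> s" "(f y, f z) \<in> s"
    "map (map_prod f f) u \<in> lists s" "map (map_prod f f) v \<in> lists s"
    by (auto simp: isotone_on_def)
  then show ?case
    using interval_cong.ic_split[of "f x" "f y" s "f z" "map (map_prod f f) u"
        "map (map_prod f f) v" B]
    by simp
qed (auto intro: interval_cong.intros)

lemma ic_class_self: "w \<in> lists r \<Longrightarrow> w \<in> ic_class A r w"
  by (simp add: ic_class_def interval_cong.ic_refl)

lemma ic_class_eqI: "interval_cong A r u v \<Longrightarrow> ic_class A r u = ic_class A r v"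
  unfolding ic_class_def by (auto intro: interval_cong.ic_trans interval_cong.ic_sym)

lemma ic_class_eq_iff:
  assumes "u \<in> lists r"
  shows "ic_class A r u = ic_class A r v \<longleftrightarrow> interval_cong A r u v"
proof
  assume "ic_class A r u = ic_class A r v"
  then have "u \<in> ic_class A r v" using assms ic_class_self by metis
  then show "interval_cong A r u v"
    by (simp add: ic_class_def interval_cong.ic_sym)
qed (rule ic_class_eqI)

lemma interval_monoid_mult_ic_class:
  assumes "u \<in> lists r" "v \<in> lists r" "refl_on A r" "trans r"
  shows "ic_class A r u \<otimes>\<^bsub>interval_monoid A r\<^esub> ic_class A r v = ic_class A r (u @ v)"
proof -
  have "ic_class A r (u' @ v') = ic_class A r (u @ v)"
    if "u' \<in> ic_class A r u" "v' \<in> ic_class A r v" for u' v'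
    using that assms by (metis ic_class_def ic_class_eqI interval_cong_append mem_Collect_eq)
  moreover have "ic_class A r u \<noteq> {}" "ic_class A r v \<noteq> {}"
    using assms ic_class_self by blast+
  ultimately show ?thesis
    by (simp add: interval_monoid_def)
qed

fun reduce_cons :: "'a \<times> 'a \<Rightarrow> ('a \<times> 'a) list \<Rightarrow> ('a \<times> 'a) list" where
  "reduce_cons (x, y) [] = (if x = y then [] else [(x, y)])"
| "reduce_cons (x, y) ((y', z) # w) =
     (if x = y then (y', z) # w
      else if y' = y then (if x = z then w else (x, z) # w)
      else (x, y) # (y', z) # w)"

fun reduce :: "('a \<times> 'a) list \<Rightarrow> ('a \<times> 'a) list" where
  "reduce [] = []"
| "reduce (a # w) = reduce_cons a (reduce w)"

fun reduced :: "('a \<times> 'a) list \<Rightarrow> bool" where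
  "reduced [] = True"
| "reduced [a] = True"
| "reduced (a # b # w) \<longleftrightarrow> snd a \<noteq> fst b \<and> reduced (b # w)"

lemma reduced_reduce_cons: "reduced w \<Longrightarrow> reduced (reduce_cons a w)"
  by (cases a; cases w rule: reduced.cases) auto

lemma reduced_reduce: "reduced (reduce w)"
  by (induction w) (simp_all add: reduced_reduce_cons)

lemma reduce_cons_diag: "reduce_cons (x, x) w = w"
  by (cases w) auto

lemma reduce_cons_split:
  assumes "reduced w" "(x, y) \<in> r" "(y, z) \<in> r" "antisym r"
  shows "reduce_cons (x, z) w = reduce_cons (x, y) (reduce_cons (y, z) w)"
proof -
  have "x = z \<Longrightarrow> x = y" using assms(2-4) by (auto dest: antisymD)
  then show ?thesis
    using assms(1) by (cases w rule: reduced.cases) auto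
qed

lemma reduce_eq_if_interval_cong:
  assumes "interval_cong A r u v" "antisym r"
  shows "reduce u = reduce v"
  using assms
proof (induction rule: interval_cong.induct)
  case (ic_unit x u v)
  then show ?case by (induction u) (simp_all add: reduce_cons_diag)
next
  case (ic_split x y z u v)
  then show ?case by (induction u) (simp_all add: reduce_cons_split[OF reduced_reduce])
qed auto

lemma reduce_cons_lists:
  assumes "w \<in> lists r" "a \<in> r" "trans r"
  shows "reduce_cons a w \<in> lists r"
  using assms by (cases a; cases "(a, w)" rule: reduce_cons.cases) (auto dest: transD)

lemma reduce_cons_map:
  assumes "inj_on f S" "w \<in> lists (S \<times> S)" "a \<in> S \<times> S"
  shows "reduce_cons (map_prod f f a) (map (map_prod f f) w) = map (map_prod f f) (reduce_cons a w)"
proof -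
  have "\<And>p q. p \<in> S \<Longrightarrow> q \<in> S \<Longrightarrow> f p = f q \<longleftrightarrow> p = q"
    using assms(1) by (auto dest: inj_onD)
  then show ?thesis
    using assms(2,3) by (cases a; cases "(a, w)" rule: reduce_cons.cases) auto
qed

lemma reduce_lists: "w \<in> lists r \<Longrightarrow> trans r \<Longrightarrow> reduce w \<in> lists r"
  by (induction w) (simp_all add: reduce_cons_lists)

lemma reduce_map:
  assumes "inj_on f S" "w \<in> lists (S \<times> S)"
  shows "reduce (map (map_prod f f) w) = map (map_prod f f) (reduce w)"
proof -
  have "trans (S \<times> S)" by (auto intro: transI)
  then show ?thesis
    using assms by (induction w) (simp_all add: reduce_cons_map reduce_lists)
qed

lemma interval_cong_reduce_cons:
  assumes "w \<in> lists r" "a \<in> r" "refl_on A r" "r \<subseteq> A \<times> A" "trans r"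
  shows "interval_cong A r (a # w) (reduce_cons a w)"
proof -
  have drop_loop: "interval_cong A r ((x, x) # v) v" if "(x, x) \<in> r" "v \<in> lists r" for x v
    using interval_cong.ic_unit[of x A "[]" r v] that assms(4) by auto
  obtain x y where a: "a = (x, y)" by fastforce
  show ?thesis
  proof (cases "x = y")
    case True
    then show ?thesis using a assms(1,2) drop_loop by (simp add: reduce_cons_diag)
  next
    case x_ne_y: False
    show ?thesis
    proof (cases "\<exists>z w'. w = (y, z) # w'")
      case True
      then obtain z w' where w: "w = (y, z) # w'" by blast
      have yz: "(y, z) \<in> r" and w': "w' \<in> lists r" using assms(1) w by auto
      have xz: "(x, z) \<in> r" using assms(2,5) a yz by (auto dest: transD)
      have merge: "interval_cong A r ((x, y) # (y, z) # w') ((x, z) # w')"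
        using interval_cong.ic_split[of x y r z "[]" w' A] assms(2) a yz w'
        by (auto intro: interval_cong.ic_sym)
      show ?thesis
      proof (cases "x = z")
        case True
        then show ?thesis
          using merge drop_loop[of x w'] xz w' a w x_ne_y by (auto intro: interval_cong.ic_trans)
      next
        case False
        then show ?thesis using merge a w x_ne_y by simp
      qed
    next
      case False
      then have "reduce_cons a w = a # w"
        using a x_ne_y by (cases "(a, w)" rule: reduce_cons.cases) auto
      then show ?thesis using assms(1,2) by (simp add: interval_cong.ic_refl)
    qed
  qed
qed

lemma interval_cong_reduce:
  assumes "w \<in> lists r" "refl_on A r" "r \<subseteq> A \<times> A" "trans r"
  shows "interval_cong A r w (reduce w)"
  using assms(1)
proof (induction w)
  case Nil
  then show ?case by (simp add: interval_cong.ic_refl)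
next
  case (Cons a w)
  then have IH: "interval_cong A r w (reduce w)" "reduce w \<in> lists r" and "a \<in> r"
    using reduce_lists assms(4) by auto
  then have "interval_cong A r (a # w) (a # reduce w)"
    using interval_cong_append_left[of A r w "reduce w" "[a]"] by simp
  moreover have "interval_cong A r (a # reduce w) (reduce_cons a (reduce w))"
    using interval_cong_reduce_cons IH \<open>a \<in> r\<close> assms(2-4) by blast
  ultimately show ?case by (auto intro: interval_cong.ic_trans)
qed

lemma interval_cong_map_reflect:
  assumes "interval_cong B s (map (map_prod f f) u) (map (map_prod f f) v)"
    and "u \<in> lists r" "v \<in> lists r" "inj_on f A"
    and "refl_on A r" "r \<subseteq> A \<times> A" "trans r" "antisym s"
  shows "interval_cong A r u v"
proof -
  have uv: "u \<in> lists (A \<times> A)" "v \<in> lists (A \<times> A)" "reduce u \<in> lists (A \<times> A)" "reduce v \<in> lists (A \<times> A)"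
    using assms(2,3,6,7) reduce_lists lists_mono by blast+
  have "map (map_prod f f) (reduce u) = map (map_prod f f) (reduce v)"
    using reduce_eq_if_interval_cong[OF assms(1,8)] reduce_map[OF assms(4)] uv by metis
  moreover have "inj_on (map_prod f f) (set (reduce u) \<union> set (reduce v))"
    using map_prod_inj_on[OF assms(4) assms(4)] uv by (auto elim: inj_on_subset)
  ultimately have "reduce u = reduce v" by (simp add: inj_on_map_eq_map)
  then show ?thesis
    using interval_cong_reduce[OF assms(2) assms(5-7)] interval_cong_reduce[OF assms(3) assms(5-7)]
    by (metis interval_cong.ic_sym interval_cong.ic_trans)
qed

lemma interval_monoid_hom_eqI:
  assumes "monoid_hom (interval_monoid A r) H h" "monoid_hom (interval_monoid A r) H h'"
    and "\<And>x y. (x, y) \<in> r \<Longrightarrow> h (interval_gen A r x y) = h' (interval_gen A r x y)"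
    and "refl_on A r" "trans r" "X \<in> carrier (interval_monoid A r)"
  shows "h X = h' X"
proof -
  obtain u where u: "u \<in> lists r" "X = ic_class A r u"
    using assms(6) by (auto simp: interval_monoid_def)
  have "h (ic_class A r u) = h' (ic_class A r u)"
    using u(1)
  proof (induction u)
    case Nil
    then show ?case
      using assms(1,2) by (simp add: monoid_hom_def interval_monoid_def)
  next
    case (Cons a w)
    then have a: "a \<in> r" and w: "w \<in> lists r" by auto
    have factor: "ic_class A r (a # w) = ic_class A r [a] \<otimes>\<^bsub>interval_monoid A r\<^esub> ic_class A r w"
      using interval_monoid_mult_ic_class[of "[a]" r w A] a w assms(4,5) by simp
    have carrier: "ic_class A r [a] \<in> carrier (interval_monoid A r)"
      "ic_class A r w \<in> carrier (interval_monoid A r)"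
      using a w by (auto simp: interval_monoid_def)
    have "h (ic_class A r [a]) = h' (ic_class A r [a])"
      using assms(3) a by (cases a) (simp add: interval_gen_def)
    moreover have "h (ic_class A r w) = h' (ic_class A r w)"
      using Cons w by simp
    ultimately show ?case
      using factor hom_mult[OF _ carrier] assms(1,2) by (metis monoid_hom_def)
  qed
  then show ?thesis using u(2) by simp
qed

definition interval_monoid_map ::
    "('a \<Rightarrow> 'b) \<Rightarrow> 'b set \<Rightarrow> ('b \<times> 'b) set \<Rightarrow> ('a \<times> 'a) list set \<Rightarrow> ('b \<times> 'b) list set" where
  "interval_monoid_map f B s X = (\<Union>w\<in>X. ic_class B s (map (map_prod f f) w))"

lemma interval_monoid_map_ic_class:
  assumes "u \<in> lists r" "isotone_on A r B s f"
  shows "interval_monoid_map f B s (ic_class A r u) = ic_class B s (map (map_prod f f) u)"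
proof -
  have "ic_class B s (map (map_prod f f) w) = ic_class B s (map (map_prod f f) u)"
    if "w \<in> ic_class A r u" for w
    using that assms(2) by (metis ic_class_def ic_class_eqI interval_cong_map mem_Collect_eq)
  then show ?thesis
    using ic_class_self[OF assms(1)] unfolding interval_monoid_map_def by blast
qed

lemma monoid_hom_interval_monoid_map:
  assumes "isotone_on A r B s f" "refl_on A r" "trans r" "refl_on B s" "trans s"
  shows "monoid_hom (interval_monoid A r) (interval_monoid B s) (interval_monoid_map f B s)"
proof -
  have map_lists: "map (map_prod f f) u \<in> lists s" if "u \<in> lists r" for u
    using that assms(1) by (auto simp: isotone_on_def)
  note map_class = interval_monoid_map_ic_class[OF _ assms(1)]
  have "interval_monoid_map f B s \<in> hom (interval_monoid A r) (interval_monoid B s)"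
  proof (rule homI)
    fix X assume "X \<in> carrier (interval_monoid A r)"
    then obtain u where "u \<in> lists r" "X = ic_class A r u"
      by (auto simp: interval_monoid_def)
    then show "interval_monoid_map f B s X \<in> carrier (interval_monoid B s)"
      using map_class map_lists by (simp add: interval_monoid_def)
  next
    fix X Y assume "X \<in> carrier (interval_monoid A r)" "Y \<in> carrier (interval_monoid A r)"
    then obtain u v where uv: "u \<in> lists r" "v \<in> lists r"
      and XY: "X = ic_class A r u" "Y = ic_class A r v"
      by (auto simp: interval_monoid_def)
    have "interval_monoid_map f B s (X \<otimes>\<^bsub>interval_monoid A r\<^esub> Y)
        = ic_class B s (map (map_prod f f) u @ map (map_prod f f) v)"
      using XY uv map_class interval_monoid_mult_ic_class[OF uv assms(2,3)] by simp
    also have "\<dots> = interval_monoid_map f B s X \<otimes>\<^bsub>interval_monoid B s\<^esub> interval_monoid_map f B s Y"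
      using XY uv map_class map_lists interval_monoid_mult_ic_class[OF _ _ assms(4,5)] by simp
    finally show "interval_monoid_map f B s (X \<otimes>\<^bsub>interval_monoid A r\<^esub> Y)
        = interval_monoid_map f B s X \<otimes>\<^bsub>interval_monoid B s\<^esub> interval_monoid_map f B s Y" .
  qed
  moreover have "interval_monoid_map f B s \<one>\<^bsub>interval_monoid A r\<^esub> = \<one>\<^bsub>interval_monoid B s\<^esub>"
    using map_class[of "[]"] by (simp add: interval_monoid_def)
  ultimately show ?thesis by (simp add: monoid_hom_def)
qed

lemma inj_on_interval_monoid_map:
  assumes "inj_on f A" "isotone_on A r B s f"
    and "refl_on A r" "r \<subseteq> A \<times> A" "trans r" "antisym s"
  shows "inj_on (interval_monoid_map f B s) (carrier (interval_monoid A r))"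
proof (rule inj_onI)
  fix X Y
  assume "X \<in> carrier (interval_monoid A r)" "Y \<in> carrier (interval_monoid A r)"
    and eq: "interval_monoid_map f B s X = interval_monoid_map f B s Y"
  then obtain u v where u: "u \<in> lists r" "X = ic_class A r u" and v: "v \<in> lists r" "Y = ic_class A r v"
    by (auto simp: interval_monoid_def)
  have "map (map_prod f f) u \<in> lists s"
    using u(1) assms(2) by (auto simp: isotone_on_def)
  then have "interval_cong B s (map (map_prod f f) u) (map (map_prod f f) v)"
    using eq u v interval_monoid_map_ic_class[OF _ assms(2)] ic_class_eq_iff by metis
  then have "interval_cong A r u v"
    using interval_cong_map_reflect u(1) v(1) assms(1,3-6) by blast
  then show "X = Y" using u(2) v(2) ic_class_eqI by blast
qed

theorem lemma8p1:
  fixes A :: "'a set" and r :: "('a \<times> 'a) set"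
    and B :: "'b set" and s :: "('b \<times> 'b) set"
    and f :: "'a \<Rightarrow> 'b"
  assumes "partial_order_on A r" and "r \<subseteq> A \<times> A"
    and "partial_order_on B s" and "s \<subseteq> B \<times> B"
    and "isotone_on A r B s f"
  shows "\<exists>h. monoid_hom (interval_monoid A r) (interval_monoid B s) h
           \<and> (\<forall>x y. (x, y) \<in> r \<longrightarrow> h (interval_gen A r x y) = interval_gen B s (f x) (f y))
           \<and> (\<forall>h'. monoid_hom (interval_monoid A r) (interval_monoid B s) h'
                  \<and> (\<forall>x y. (x, y) \<in> r \<longrightarrow> h' (interval_gen A r x y) = interval_gen B s (f x) (f y))
                  \<longrightarrow> (\<forall>X \<in> carrier (interval_monoid A r). h' X = h X))
           \<and> (inj_on f A \<longrightarrow> inj_on h (carrier (interval_monoid A r)))"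
proof -
  have A: "refl_on A r" "trans r" and B: "refl_on B s" "trans s" "antisym s"
    using assms(1,3) by (auto simp: partial_order_on_def preorder_on_def)
  let ?h = "interval_monoid_map f B s"
  have hom: "monoid_hom (interval_monoid A r) (interval_monoid B s) ?h"
    using monoid_hom_interval_monoid_map assms(5) A B(1,2) by blast
  have gen: "?h (interval_gen A r x y) = interval_gen B s (f x) (f y)" if "(x, y) \<in> r" for x y
    using interval_monoid_map_ic_class[of "[(x, y)]" r A B s f] that assms(5)
    by (simp add: interval_gen_def)
  have "h' X = ?h X"
    if "monoid_hom (interval_monoid A r) (interval_monoid B s) h'"
      and "\<forall>x y. (x, y) \<in> r \<longrightarrow> h' (interval_gen A r x y) = interval_gen B s (f x) (f y)"
      and "X \<in> carrier (interval_monoid A r)" for h' X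
    using interval_monoid_hom_eqI[OF that(1) hom _ A that(3)] that(2) gen by simp
  moreover have "inj_on f A \<longrightarrow> inj_on ?h (carrier (interval_monoid A r))"
    using inj_on_interval_monoid_map assms(2,5) A B(3) by blast
  ultimately show ?thesis using hom gen by blast
qed

end
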